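(* With probability at least $1-\delta$, for every $k\in[K]$ and every policy $\pi\in\Pi^k$, $V_1^\pi(\mu;c,P)\le\tau$.
   Context: Episodic constrained MDP. $\mathcal S,\mathcal A$ finite, $H\ge1$ integer. For each $h\in[H]$, $(s,a)$: unknown transition distribution $P_h(\cdot\mid s,a)$, unknown mean reward $r_h(s,a)\in[0,1]$, unknown mean cost $c_h(s,a)\in[0,1]$. Known initial distribution $\mu$, threshold $\tau\in(0,H]$. Policies $\pi=(\pi_h)$ are randomized Markov. $V_h^\pi(s;g,P'):=\mathbb E_{P',\pi}[\sum_{t=h}^Hg_t(S_t,A_t)\mid S_h=s]$, $V_1^\pi(\mu;g,P'):=\mathbb E_{S_1\sim\mu}V_1^\pi(S_1;g,P')$. A policy $\pi^0$ is known with $V_1^{\pi^0}(\mu;c,P)=c^0<\tau$, $c^0$ known. Interaction over $K$ episodes: in episode $k$, $\pi^k$ depends only on previous data; $S_1^k\sim\mu$, $A_h^k\sim\pi_h^k(\cdot\mid S_h^k)$, observed $R_h^k=r_h(S_h^k,A_h^k)+\text{noise}$, $C_h^k=c_h(S_h^k,A_h^k)+\text{noise}$, $S_{h+1}^k\sim P_h(\cdot\mid S_h^k,A_h^k)$; $\mathcal F_k$ is generated by all observations of episodes $1..k$; noises are conditionally independent, zero mean and satisfy $\mathbb E[e^{\lambda\xi}\mid\mathcal F_{k-1}]\le e^{\lambda^2/4}$ for all real $\lambda$. Estimates: $N_h^k(s,a)$ = visits of $(s,a)$ at step $h$ in episodes $1..k-1$; $\hat P^k_h$, $\hat r_h^k$,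 $\hat c_h^k$ the empirical transition frequencies and empirical means of observed rewards/costs (denominator $N_h^k(s,a)\vee1$); $Z:=\log(16|\mathcal S|^2|\mathcal A|HK/\delta)$, $\beta_h^k(s,a):=\sqrt{Z/(N_h^k(s,a)\vee1)}$, $\delta\in(0,1)$. OptPess-LP: $\alpha_r:=1+|\mathcal S|H+\frac{4H(1+|\mathcal S|H)}{\tau-c^0}$, $\bar r_h^k:=\hat r_h^k+\alpha_r\beta_h^k$, $\underline c_h^k:=\hat c_h^k+(1+H|\mathcal S|)\beta_h^k$; $\Pi^k:=\{\pi^0\}$ if $V_1^{\pi^0}(\mu;\underline c^k,\hat P^k)\ge(\tau+c^0)/2$, otherwise $\Pi^k:=\{\pi:V_1^\pi(\mu;\underline c^k,\hat P^k)\le\tau\}$; the algorithm executes $\pi^k\in\arg\max_{\pi\in\Pi^k}V_1^\pi(\mu;\bar r^k,\hat P^k)$ in episode $k$. *)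

theory Defs
  imports "HOL-Probability.Probability"
begin

text \<open>Conventions. Steps h range over 1..H, episodes k over 1..K.
 A transition kernel is P h s a s' = P_h(s'|s,a); a reward/cost function is g h s a;
 a randomized Markov policy is q h s a = pi_h(a|s).\<close>

definition is_dist :: "('x::finite \<Rightarrow> real) \<Rightarrow> bool" where
  "is_dist p \<longleftrightarrow> (\<forall>x. 0 \<le> p x) \<and> (\<Sum>x\<in>UNIV. p x) = 1"

definition is_policy :: "nat \<Rightarrow> (nat \<Rightarrow> 's::finite \<Rightarrow> 'a::finite \<Rightarrow> real) \<Rightarrow> bool" where
  "is_policy H q \<longleftrightarrow> (\<forall>h\<in>{1..H}. \<forall>s. is_dist (q h s))"

text \<open>Vr n h q g P s: expected sum of g over the n steps h, h+1, ..., h+n-1 under q and P,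
 starting in s at step h (Bellman recursion; P need not be stochastic, e.g. for empirical
 estimates of unvisited pairs).\<close>
fun Vr :: "nat \<Rightarrow> nat \<Rightarrow> (nat \<Rightarrow> 's::finite \<Rightarrow> 'a::finite \<Rightarrow> real) \<Rightarrow> (nat \<Rightarrow> 's \<Rightarrow> 'a \<Rightarrow> real)
            \<Rightarrow> (nat \<Rightarrow> 's \<Rightarrow> 'a \<Rightarrow> 's \<Rightarrow> real) \<Rightarrow> 's \<Rightarrow> real" where
  "Vr 0 h q g P s = 0"
| "Vr (Suc n) h q g P s =
     (\<Sum>a\<in>UNIV. q h s a * (g h s a + (\<Sum>s'\<in>UNIV. P h s a s' * Vr n (Suc h) q g P s')))"

definition Vh :: "nat \<Rightarrow> nat \<Rightarrow> (nat \<Rightarrow> 's::finite \<Rightarrow> 'a::finite \<Rightarrow> real) \<Rightarrow> 's \<Rightarrow>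
                  (nat \<Rightarrow> 's \<Rightarrow> 'a \<Rightarrow> real) \<Rightarrow> (nat \<Rightarrow> 's \<Rightarrow> 'a \<Rightarrow> 's \<Rightarrow> real) \<Rightarrow> real" where
  "Vh H h q s g P = Vr (H + 1 - h) h q g P s"

definition V1 :: "nat \<Rightarrow> (nat \<Rightarrow> 's::finite \<Rightarrow> 'a::finite \<Rightarrow> real) \<Rightarrow> ('s \<Rightarrow> real) \<Rightarrow>
                  (nat \<Rightarrow> 's \<Rightarrow> 'a \<Rightarrow> real) \<Rightarrow> (nat \<Rightarrow> 's \<Rightarrow> 'a \<Rightarrow> 's \<Rightarrow> real) \<Rightarrow> real" where
  "V1 H q mu g P = (\<Sum>s\<in>UNIV. mu s * Vh H 1 q s g P)"

text \<open>The observed data: S k h (h = 1..H+1), A k h, R k h, C k h (h = 1..H), episode k.\<close>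

definition gen_ev :: "'w measure \<Rightarrow> 'b measure \<Rightarrow> ('w \<Rightarrow> 'b) \<Rightarrow> 'w set set" where
  "gen_ev M N X = {X -` B \<inter> space M | B. B \<in> sets N}"

definition ep_events :: "'w measure \<Rightarrow> nat \<Rightarrow> (nat \<Rightarrow> nat \<Rightarrow> 'w \<Rightarrow> 's) \<Rightarrow> (nat \<Rightarrow> nat \<Rightarrow> 'w \<Rightarrow> 'a)
     \<Rightarrow> (nat \<Rightarrow> nat \<Rightarrow> 'w \<Rightarrow> real) \<Rightarrow> (nat \<Rightarrow> nat \<Rightarrow> 'w \<Rightarrow> real) \<Rightarrow> nat \<Rightarrow> 'w set set" where
  "ep_events M H S A R C j =
     (\<Union>h\<in>{1..H+1}. gen_ev M (count_space UNIV) (S j h))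
   \<union> (\<Union>h\<in>{1..H}. gen_ev M (count_space UNIV) (A j h) \<union> gen_ev M borel (R j h) \<union> gen_ev M borel (C j h))"

definition Falg :: "'w measure \<Rightarrow> nat \<Rightarrow> (nat \<Rightarrow> nat \<Rightarrow> 'w \<Rightarrow> 's) \<Rightarrow> (nat \<Rightarrow> nat \<Rightarrow> 'w \<Rightarrow> 'a)
     \<Rightarrow> (nat \<Rightarrow> nat \<Rightarrow> 'w \<Rightarrow> real) \<Rightarrow> (nat \<Rightarrow> nat \<Rightarrow> 'w \<Rightarrow> real) \<Rightarrow> nat \<Rightarrow> 'w measure" where
  "Falg M H S A R C k = sigma (space M) (\<Union>j\<in>{1..k}. ep_events M H S A R C j)"

text \<open>Within-episode history sigma-algebra of episode k at step h:
  F_(k-1) together with S k 1..h and A,R,C k 1..h-1, and additionally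
  st = 0: nothing; st = 1: A k h; st = 2: A k h, R k h; st = 3: A k h, R k h, C k h.
  The data of an episode is revealed in the order S_1, A_1, R_1, C_1, S_2, ..., S_(H+1).\<close>
definition Galg :: "'w measure \<Rightarrow> nat \<Rightarrow> (nat \<Rightarrow> nat \<Rightarrow> 'w \<Rightarrow> 's) \<Rightarrow> (nat \<Rightarrow> nat \<Rightarrow> 'w \<Rightarrow> 'a)
     \<Rightarrow> (nat \<Rightarrow> nat \<Rightarrow> 'w \<Rightarrow> real) \<Rightarrow> (nat \<Rightarrow> nat \<Rightarrow> 'w \<Rightarrow> real) \<Rightarrow> nat \<Rightarrow> nat \<Rightarrow> nat \<Rightarrow> 'w measure" where
  "Galg M H S A R C k h st = sigma (space M)
     ((\<Union>j\<in>{1..<k}. ep_events M H S A R C j)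
    \<union> (\<Union>i\<in>{1..h}. gen_ev M (count_space UNIV) (S k i))
    \<union> (\<Union>i\<in>{1..<h}. gen_ev M (count_space UNIV) (A k i) \<union> gen_ev M borel (R k i) \<union> gen_ev M borel (C k i))
    \<union> (if 1 \<le> st then gen_ev M (count_space UNIV) (A k h) else {})
    \<union> (if 2 \<le> st then gen_ev M borel (R k h) else {})
    \<union> (if 3 \<le> st then gen_ev M borel (C k h) else {}))"

definition Ncnt :: "(nat \<Rightarrow> nat \<Rightarrow> 'w \<Rightarrow> 's) \<Rightarrow> (nat \<Rightarrow> nat \<Rightarrow> 'w \<Rightarrow> 'a) \<Rightarrow> nat \<Rightarrow> nat \<Rightarrow> 's \<Rightarrow> 'a \<Rightarrow> 'w \<Rightarrow> nat" where
  "Ncnt S A k h s a w = card {j\<in>{1..<k}. S j h w = s \<and> A j h w = a}"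

definition Phat :: "(nat \<Rightarrow> nat \<Rightarrow> 'w \<Rightarrow> 's) \<Rightarrow> (nat \<Rightarrow> nat \<Rightarrow> 'w \<Rightarrow> 'a) \<Rightarrow> nat \<Rightarrow> 'w \<Rightarrow> nat \<Rightarrow> 's \<Rightarrow> 'a \<Rightarrow> 's \<Rightarrow> real" where
  "Phat S A k w h s a s' =
     real (card {j\<in>{1..<k}. S j h w = s \<and> A j h w = a \<and> S j (Suc h) w = s'})
       / real (max (Ncnt S A k h s a w) 1)"

definition emp_mean :: "(nat \<Rightarrow> nat \<Rightarrow> 'w \<Rightarrow> 's) \<Rightarrow> (nat \<Rightarrow> nat \<Rightarrow> 'w \<Rightarrow> 'a) \<Rightarrow> (nat \<Rightarrow> nat \<Rightarrow> 'w \<Rightarrow> real)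
      \<Rightarrow> nat \<Rightarrow> 'w \<Rightarrow> nat \<Rightarrow> 's \<Rightarrow> 'a \<Rightarrow> real" where
  "emp_mean S A X k w h s a =
     (\<Sum>j\<in>{j\<in>{1..<k}. S j h w = s \<and> A j h w = a}. X j h w) / real (max (Ncnt S A k h s a w) 1)"

definition Zconf :: "'s::finite itself \<Rightarrow> 'a::finite itself \<Rightarrow> nat \<Rightarrow> nat \<Rightarrow> real \<Rightarrow> real" where
  "Zconf _ _ H K \<delta> = ln (16 * real (CARD('s))^2 * real (CARD('a)) * real H * real K / \<delta>)"

definition beta :: "nat \<Rightarrow> nat \<Rightarrow> real \<Rightarrow> (nat \<Rightarrow> nat \<Rightarrow> 'w \<Rightarrow> 's::finite) \<Rightarrow> (nat \<Rightarrow> nat \<Rightarrow> 'w \<Rightarrow> 'a::finite)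
      \<Rightarrow> nat \<Rightarrow> 'w \<Rightarrow> nat \<Rightarrow> 's \<Rightarrow> 'a \<Rightarrow> real" where
  "beta H K \<delta> S A k w h s a =
     sqrt (Zconf TYPE('s) TYPE('a) H K \<delta> / real (max (Ncnt S A k h s a w) 1))"

definition alpha_r :: "'s::finite itself \<Rightarrow> nat \<Rightarrow> real \<Rightarrow> real \<Rightarrow> real" where
  "alpha_r _ H \<tau> c0 = 1 + real (CARD('s)) * real H
      + 4 * real H * (1 + real (CARD('s)) * real H) / (\<tau> - c0)"

definition rbar :: "nat \<Rightarrow> nat \<Rightarrow> real \<Rightarrow> real \<Rightarrow> real \<Rightarrow> (nat \<Rightarrow> nat \<Rightarrow> 'w \<Rightarrow> 's::finite) \<Rightarrow> (nat \<Rightarrow> nat \<Rightarrow> 'w \<Rightarrow> 'a::finite)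
      \<Rightarrow> (nat \<Rightarrow> nat \<Rightarrow> 'w \<Rightarrow> real) \<Rightarrow> nat \<Rightarrow> 'w \<Rightarrow> nat \<Rightarrow> 's \<Rightarrow> 'a \<Rightarrow> real" where
  "rbar H K \<delta> \<tau> c0 S A R k w h s a =
     emp_mean S A R k w h s a + alpha_r TYPE('s) H \<tau> c0 * beta H K \<delta> S A k w h s a"

definition cpess :: "nat \<Rightarrow> nat \<Rightarrow> real \<Rightarrow> (nat \<Rightarrow> nat \<Rightarrow> 'w \<Rightarrow> 's::finite) \<Rightarrow> (nat \<Rightarrow> nat \<Rightarrow> 'w \<Rightarrow> 'a::finite)
      \<Rightarrow> (nat \<Rightarrow> nat \<Rightarrow> 'w \<Rightarrow> real) \<Rightarrow> nat \<Rightarrow> 'w \<Rightarrow> nat \<Rightarrow> 's \<Rightarrow> 'a \<Rightarrow> real" where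
  "cpess H K \<delta> S A C k w h s a =
     emp_mean S A C k w h s a + (1 + real H * real (CARD('s))) * beta H K \<delta> S A k w h s a"

definition PiSet :: "nat \<Rightarrow> nat \<Rightarrow> real \<Rightarrow> real \<Rightarrow> real \<Rightarrow> ('s::finite \<Rightarrow> real)
      \<Rightarrow> (nat \<Rightarrow> 's \<Rightarrow> 'a::finite \<Rightarrow> real) \<Rightarrow> (nat \<Rightarrow> nat \<Rightarrow> 'w \<Rightarrow> 's) \<Rightarrow> (nat \<Rightarrow> nat \<Rightarrow> 'w \<Rightarrow> 'a)
      \<Rightarrow> (nat \<Rightarrow> nat \<Rightarrow> 'w \<Rightarrow> real) \<Rightarrow> nat \<Rightarrow> 'w \<Rightarrow> (nat \<Rightarrow> 's \<Rightarrow> 'a \<Rightarrow> real) set" where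
  "PiSet H K \<delta> \<tau> c0 \<mu> pi0 S A C k w =
     (if (\<tau> + c0) / 2 \<le> V1 H pi0 \<mu> (cpess H K \<delta> S A C k w) (Phat S A k w) then {pi0}
      else {q. is_policy H q \<and> V1 H q \<mu> (cpess H K \<delta> S A C k w) (Phat S A k w) \<le> \<tau>})"

end

theory Submission
  imports Defs
begin

text \<open>Call an episode good if every unknown cost \<open>c h s a\<close> and every transition
  probability \<open>P h s a s'\<close> exceeds its empirical estimate by at most the bonus \<open>beta\<close>.
  On a good episode the simulation lemma gives \<open>V(q; c, P) \<le> V(q; cpess, Phat)\<close> for every
  policy \<open>q\<close>, because \<open>cpess\<close> adds \<open>H |S| beta\<close> to the cost estimate; hence every policy of
  \<open>Pi^k\<close> (either \<open>pi0\<close>, or one whose pessimistic cost is at most \<open>tau\<close>) is safe.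

  All episodes are good with probability \<open>1 - delta\<close>.  Fix \<open>(h, s, a)\<close> and a count \<open>n\<close>
  and sum the deviations mean minus observation over the first \<open>n\<close> visits of \<open>(h, s, a)\<close>.
  Whether an episode is among these visits is known before its observation, and the
  observation noise is conditionally sub-Gaussian (costs by hypothesis, next-state
  indicators by Hoeffding's lemma), so the exponential of the selected sum is a
  supermartingale and Markov's inequality bounds the probability that it exceeds
  \<open>sqrt (Z n)\<close> by \<open>exp (- Z)\<close>.  Indexing by the count rather than by the episode makes
  the random number of visits harmless: a union bound over the \<open>H |S| |A| (|S| + 1) K\<close>
  choices of \<open>(h, s, a, n)\<close> and \<open>s'\<close> costs exactly \<open>delta (|S| + 1) / (16 |S|) \<le> delta\<close>.\<close>

section \<open>Conditional exponential moment bounds\<close>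

text \<open>\<open>E[g | F] \<le> b\<close>, tested against nonnegative \<open>F\<close>-measurable weights so that no
  integrability of \<open>g\<close> is needed.\<close>
definition cond_exp_le :: "'w measure \<Rightarrow> 'w measure \<Rightarrow> ('w \<Rightarrow> real) \<Rightarrow> real \<Rightarrow> bool" where
  "cond_exp_le M F g b \<longleftrightarrow> (\<forall>f \<in> borel_measurable F. (\<forall>w. 0 \<le> f w) \<longrightarrow>
     (\<integral>\<^sup>+w. ennreal (f w * g w) \<partial>M) \<le> (\<integral>\<^sup>+w. ennreal (f w * b) \<partial>M))"

lemma cond_exp_leD:
  fixes f :: "'w \<Rightarrow> real"
  shows "cond_exp_le M F g b \<Longrightarrow> f \<in> borel_measurable F \<Longrightarrow> (\<And>w. 0 \<le> f w) \<Longrightarrow>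
     (\<integral>\<^sup>+w. ennreal (f w * g w) \<partial>M) \<le> (\<integral>\<^sup>+w. ennreal (f w * b) \<partial>M)"
  unfolding cond_exp_le_def by blast

lemma cond_exp_le_mono:
  assumes "cond_exp_le M F g b" "b \<le> b'"
  shows "cond_exp_le M F g b'"
  unfolding cond_exp_le_def
proof (intro ballI impI)
  fix f :: "_ \<Rightarrow> real" assume f: "f \<in> borel_measurable F" "\<forall>w. 0 \<le> f w"
  have "(\<integral>\<^sup>+w. ennreal (f w * g w) \<partial>M) \<le> (\<integral>\<^sup>+w. ennreal (f w * b) \<partial>M)"
    using cond_exp_leD[OF assms(1) f(1)] f(2) by blast
  also have "\<dots> \<le> (\<integral>\<^sup>+w. ennreal (f w * b') \<partial>M)"
    using f(2) assms(2) by (intro nn_integral_mono ennreal_leI mult_left_mono) auto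
  finally show "(\<integral>\<^sup>+w. ennreal (f w * g w) \<partial>M) \<le> (\<integral>\<^sup>+w. ennreal (f w * b') \<partial>M)" .
qed

lemma cond_exp_le_cong:
  assumes "\<And>w. w \<in> space M \<Longrightarrow> g w = g' w"
  shows "cond_exp_le M F g b \<longleftrightarrow> cond_exp_le M F g' b"
proof -
  have "(\<integral>\<^sup>+w. ennreal (f w * g w) \<partial>M) = (\<integral>\<^sup>+w. ennreal (f w * g' w) \<partial>M)" for f :: "_ \<Rightarrow> real"
    using assms by (intro nn_integral_cong) simp
  then show ?thesis unfolding cond_exp_le_def by simp
qed

lemma SUP_ennreal_min_mult:
  fixes a c :: real assumes "0 \<le> a" "0 \<le> c"
  shows "(SUP m::nat. ennreal (min a (real m) * c)) = ennreal (a * c)"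
proof (rule antisym)
  show "(SUP m::nat. ennreal (min a (real m) * c)) \<le> ennreal (a * c)"
    by (rule SUP_least) (use assms in \<open>auto intro!: ennreal_leI mult_right_mono\<close>)
  obtain m :: nat where "a \<le> real m" using real_arch_simple by blast
  then have "ennreal (a * c) = ennreal (min a (real m) * c)" by simp
  also have "\<dots> \<le> (SUP m::nat. ennreal (min a (real m) * c))" by (rule SUP_upper) auto
  finally show "ennreal (a * c) \<le> (SUP m::nat. ennreal (min a (real m) * c))" .
qed

lemma bernoulli_mgf_le:
  fixes p l :: real assumes p: "0 \<le> p" "p \<le> 1" and l: "0 \<le> l"
  shows "p * exp (l * (p - 1)) + (1 - p) * exp (l * p) \<le> exp (l^2 / 8)"
proof -
  define y where "y = 1 + (1 - p) * (exp l - 1)"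
  have "0 < y" unfolding y_def using p l by (simp add: add_pos_nonneg)
  have exp_shift: "exp (l * (p - 1)) * exp l = exp (l * p)"
    by (simp add: algebra_simps flip: exp_add)
  have "p * exp (l * (p - 1)) + (1 - p) * exp (l * p) = exp (l * (p - 1)) * y"
    unfolding y_def exp_shift[symmetric] by (simp add: algebra_simps)
  also have "\<dots> = exp (- l * (1 - p) + ln y)"
    using \<open>0 < y\<close> by (simp only: exp_add exp_ln) (simp add: algebra_simps)
  also have "\<dots> \<le> exp (l^2 / 8)"
    using Hoeffdings_lemma_aux[OF l, of "1 - p"] p unfolding y_def by simp
  finally show ?thesis .
qed

context prob_space
begin

lemma sigma_finite_subalgebraI: "subalgebra M F \<Longrightarrow> sigma_finite_subalgebra M F"
  by (intro finite_measure_subalgebra_is_sigma_finite)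
    (simp add: finite_measure_subalgebra_def finite_measure_subalgebra_axioms_def finite_measure_axioms)

lemma nn_integral_mult_le_of_real_cond_exp_le:
  assumes F: "subalgebra M F"
    and f: "f \<in> borel_measurable F" "\<And>w. 0 \<le> f w" "\<And>w. f w \<le> B"
    and g: "integrable M g" "\<And>w. 0 \<le> g w"
    and b: "AE w in M. real_cond_exp M F g w \<le> b" "0 \<le> b"
  shows "(\<integral>\<^sup>+w. ennreal (f w * g w) \<partial>M) \<le> (\<integral>\<^sup>+w. ennreal (f w * b) \<partial>M)"
proof -
  interpret sigma_finite_subalgebra M F using F by (rule sigma_finite_subalgebraI)
  have [measurable]: "f \<in> borel_measurable M" "g \<in> borel_measurable M"
    using measurable_from_subalg[OF F f(1)] g(1) by auto
  have B: "0 \<le> B" using f(2)[of undefined] f(3)[of undefined] by linarith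
  have int_g: "integrable M (\<lambda>w. f w * g w)"
    by (rule Bochner_Integration.integrable_bound[of M "\<lambda>w. B * g w"])
      (use g f B in \<open>auto simp: abs_mult intro!: mult_right_mono\<close>)
  have int_b: "integrable M (\<lambda>w. f w * b)"
    by (rule Bochner_Integration.integrable_bound[of M "\<lambda>w. B * b"])
      (use b f B in \<open>auto simp: abs_mult intro!: mult_right_mono\<close>)
  have "(\<integral>\<^sup>+w. ennreal (f w * g w) \<partial>M) = ennreal (\<integral>w. f w * g w \<partial>M)"
    by (rule nn_integral_eq_integral[OF int_g]) (use f g(2) in auto)
  also have "(\<integral>w. f w * g w \<partial>M) = (\<integral>w. f w * real_cond_exp M F g w \<partial>M)"
    by (rule real_cond_exp_intg(2)[OF int_g f(1), symmetric]) simp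
  also have "\<dots> \<le> (\<integral>w. f w * b \<partial>M)"
    by (rule integral_mono_AE[OF real_cond_exp_intg(1)[OF int_g f(1)] int_b])
      (use b(1) f in \<open>auto intro: mult_left_mono\<close>)
  also have "ennreal (\<integral>w. f w * b \<partial>M) = (\<integral>\<^sup>+w. ennreal (f w * b) \<partial>M)"
    by (rule nn_integral_eq_integral[OF int_b, symmetric]) (use f b(2) in auto)
  finally show ?thesis by (simp add: ennreal_leI)
qed

text \<open>Unbounded weights are truncated at \<open>m\<close>, and \<open>m \<rightarrow> \<infinity>\<close> by monotone convergence.\<close>
lemma cond_exp_leI:
  assumes F: "subalgebra M F"
    and g: "integrable M g" "\<And>w. 0 \<le> g w"
    and b: "AE w in M. real_cond_exp M F g w \<le> b" "0 \<le> b"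
  shows "cond_exp_le M F g b"
  unfolding cond_exp_le_def
proof (intro ballI impI)
  fix f :: "_ \<Rightarrow> real" assume f: "f \<in> borel_measurable F" and f_nonneg: "\<forall>w. 0 \<le> f w"
  have [measurable]: "f \<in> borel_measurable M" "g \<in> borel_measurable M"
    using measurable_from_subalg[OF F f] g(1) by auto
  define fm where "fm m w = min (f w) (real m)" for m :: nat and w
  have fmF: "fm m \<in> borel_measurable F" for m unfolding fm_def using f by measurable
  have [measurable]: "fm m \<in> borel_measurable M" for m unfolding fm_def by measurable
  have "(\<integral>\<^sup>+w. ennreal (f w * g w) \<partial>M) = (\<integral>\<^sup>+w. (SUP m. ennreal (fm m w * g w)) \<partial>M)"
    unfolding fm_def by (rule nn_integral_cong) (simp add: SUP_ennreal_min_mult f_nonneg g(2))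
  also have "\<dots> = (SUP m. (\<integral>\<^sup>+w. ennreal (fm m w * g w) \<partial>M))"
    by (rule nn_integral_monotone_convergence_SUP)
      (auto simp: incseq_def le_fun_def fm_def intro!: ennreal_leI mult_right_mono g(2))
  also have "\<dots> \<le> (\<integral>\<^sup>+w. ennreal (f w * b) \<partial>M)"
  proof (rule SUP_least)
    fix m
    have "(\<integral>\<^sup>+w. ennreal (fm m w * g w) \<partial>M) \<le> (\<integral>\<^sup>+w. ennreal (fm m w * b) \<partial>M)"
      using f_nonneg by (intro nn_integral_mult_le_of_real_cond_exp_le[OF F fmF _ _ g b, where B = "real m"])
        (auto simp: fm_def)
    also have "\<dots> \<le> (\<integral>\<^sup>+w. ennreal (f w * b) \<partial>M)"
      using b(2) by (intro nn_integral_mono ennreal_leI mult_right_mono) (simp add: fm_def)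
    finally show "(\<integral>\<^sup>+w. ennreal (fm m w * g w) \<partial>M) \<le> (\<integral>\<^sup>+w. ennreal (f w * b) \<partial>M)" .
  qed
  finally show "(\<integral>\<^sup>+w. ennreal (f w * g w) \<partial>M) \<le> (\<integral>\<^sup>+w. ennreal (f w * b) \<partial>M)" .
qed

lemma prob_UN_le_card_mult:
  assumes "finite I" "\<And>i. i \<in> I \<Longrightarrow> B i \<in> events" "\<And>i. i \<in> I \<Longrightarrow> prob (B i) \<le> \<epsilon>"
  shows "prob (\<Union>i\<in>I. B i) \<le> real (card I) * \<epsilon>"
proof -
  have "prob (\<Union>i\<in>I. B i) \<le> (\<Sum>i\<in>I. prob (B i))"
    using assms by (intro finite_measure_subadditive_finite) auto
  also have "\<dots> \<le> real (card I) * \<epsilon>"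
    using assms(3) by (rule sum_bounded_above)
  finally show ?thesis .
qed

lemma real_cond_exp_exp_centered_indicator:
  assumes F: "subalgebra M F"
    and p: "p \<in> borel_measurable F" "\<And>w. 0 \<le> p w" "\<And>w. p w \<le> 1"
    and X: "X \<in> events" and cond_prob: "AE w in M. real_cond_exp M F (indicator X) w = p w"
    and l: "0 \<le> l"
  shows "integrable M (\<lambda>w. exp (l * (p w - indicator X w)))"
    "AE w in M. real_cond_exp M F (\<lambda>w. exp (l * (p w - indicator X w))) w
       = p w * exp (l * (p w - 1)) + (1 - p w) * exp (l * p w)"
proof -
  interpret sigma_finite_subalgebra M F using F by (rule sigma_finite_subalgebraI)
  define e where "e w = exp (l * p w)" for w
  define d where "d w = exp (l * p w) - exp (l * (p w - 1))" for w
  have eF: "e \<in> borel_measurable F" and dF: "d \<in> borel_measurable F"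
    unfolding e_def d_def using p(1) by measurable
  have [measurable]: "e \<in> borel_measurable M" "d \<in> borel_measurable M" "X \<in> sets M"
    using measurable_from_subalg[OF F] eF dF X by auto
  have bounds: "\<bar>e w\<bar> \<le> exp l" "\<bar>d w\<bar> \<le> exp l" for w
  proof -
    have "exp (l * (p w - 1)) \<le> exp (l * p w)" "exp (l * p w) \<le> exp l"
      using l p(3)[of w] by (simp_all add: mult_left_mono mult_left_le)
    then show "\<bar>e w\<bar> \<le> exp l" "\<bar>d w\<bar> \<le> exp l"
      unfolding e_def d_def using exp_gt_zero[of "l * (p w - 1)"] by linarith+
  qed
  have int_e: "integrable M e" and int_dX: "integrable M (\<lambda>w. d w * indicator X w)"
    using bounds by (intro integrable_const_bound[where B = "exp l"]; auto simp: indicator_def)+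
  have split: "exp (l * (p w - indicator X w)) = e w - d w * indicator X w" for w
    unfolding e_def d_def by (simp add: indicator_def)
  show "integrable M (\<lambda>w. exp (l * (p w - indicator X w)))"
    unfolding split using int_e int_dX by simp
  have "AE w in M. real_cond_exp M F (\<lambda>w. e w - d w * indicator X w) w
      = real_cond_exp M F e w - real_cond_exp M F (\<lambda>w. d w * indicator X w) w"
    by (rule real_cond_exp_diff[OF int_e int_dX])
  moreover have "AE w in M. real_cond_exp M F e w = e w"
    by (rule real_cond_exp_F_meas[OF int_e eF])
  moreover have "AE w in M. real_cond_exp M F (\<lambda>w. d w * indicator X w) w
      = d w * real_cond_exp M F (indicator X) w"
    by (rule real_cond_exp_mult[OF dF _ int_dX]) measurable
  ultimately show "AE w in M. real_cond_exp M F (\<lambda>w. exp (l * (p w - indicator X w))) w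
       = p w * exp (l * (p w - 1)) + (1 - p w) * exp (l * p w)"
    using cond_prob unfolding split by eventually_elim (simp add: e_def d_def algebra_simps)
qed

lemma cond_exp_le_exp_centered_indicator:
  assumes F: "subalgebra M F"
    and p: "p \<in> borel_measurable F" "\<And>w. 0 \<le> p w" "\<And>w. p w \<le> 1"
    and X: "X \<in> events" and cond_prob: "AE w in M. real_cond_exp M F (indicator X) w = p w"
    and l: "0 \<le> l"
  shows "cond_exp_le M F (\<lambda>w. exp (l * (p w - indicator X w))) (exp (l^2 / 8))"
proof (rule cond_exp_leI[OF F])
  show "AE w in M. real_cond_exp M F (\<lambda>w. exp (l * (p w - indicator X w))) w \<le> exp (l^2 / 8)"
    using real_cond_exp_exp_centered_indicator(2)[OF assms]
  proof eventually_elim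
    case (elim w)
    then show ?case using bernoulli_mgf_le[OF p(2)[of w] p(3)[of w] l] by simp
  qed
qed (use real_cond_exp_exp_centered_indicator(1)[OF assms] in simp_all)

text \<open>The exponential of the selected partial sums is a nonnegative supermartingale.\<close>
lemma nn_integral_exp_selected_sum_le_1:
  fixes Y :: "nat \<Rightarrow> 'a \<Rightarrow> real" and m :: nat
  assumes subalg: "\<And>k. k \<in> {1..K} \<Longrightarrow> subalgebra M (G k)"
    and I_pred: "\<And>k j. k \<in> {1..K} \<Longrightarrow> j \<in> {1..k} \<Longrightarrow> Measurable.pred (G k) (I j)"
    and Y_past: "\<And>k j. k \<in> {1..K} \<Longrightarrow> j \<in> {1..<k} \<Longrightarrow> Y j \<in> borel_measurable (G k)"
    and Y_meas: "\<And>k. k \<in> {1..K} \<Longrightarrow> Y k \<in> borel_measurable M"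
    and Y_mgf: "\<And>k. k \<in> {1..K} \<Longrightarrow> cond_exp_le M (G k) (\<lambda>w. exp (Y k w)) (exp v)"
  shows "m \<le> K \<Longrightarrow> (\<integral>\<^sup>+w. ennreal (exp (\<Sum>j\<in>{1..m}. if I j w then Y j w - v else 0)) \<partial>M) \<le> 1"
proof (induction m)
  case 0
  then show ?case by (simp add: emeasure_space_1)
next
  case (Suc m)
  define k where "k = Suc m"
  have k: "k \<in> {1..K}" using Suc.prems k_def by auto
  define T where "T w = (\<Sum>j\<in>{1..m}. if I j w then Y j w - v else 0)" for w
  have TG: "T \<in> borel_measurable (G k)"
    unfolding T_def
  proof (intro borel_measurable_sum)
    fix j assume "j \<in> {1..m}"
    then have [measurable]: "Measurable.pred (G k) (I j)" "Y j \<in> borel_measurable (G k)"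
      using I_pred Y_past k unfolding k_def by auto
    show "(\<lambda>w. if I j w then Y j w - v else 0) \<in> borel_measurable (G k)" by measurable
  qed
  have IkG: "Measurable.pred (G k) (I k)" using I_pred k by auto
  define f1 where "f1 w = exp (T w) * (if I k w then 0 else 1)" for w
  define f2 where "f2 w = exp (T w) * (if I k w then exp (- v) else 0)" for w
  have f1G: "f1 \<in> borel_measurable (G k)" and f2G: "f2 \<in> borel_measurable (G k)"
    unfolding f1_def f2_def using TG IkG by measurable
  have [measurable]: "f1 \<in> borel_measurable M" "f2 \<in> borel_measurable M" "Y k \<in> borel_measurable M"
    using measurable_from_subalg[OF subalg[OF k]] f1G f2G Y_meas k by auto
  have f_nonneg: "0 \<le> f1 w" "0 \<le> f2 w" for w unfolding f1_def f2_def by auto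
  have split: "exp (\<Sum>j\<in>{1..k}. if I j w then Y j w - v else 0) = f1 w + f2 w * exp (Y k w)" for w
    unfolding f1_def f2_def T_def k_def by (simp add: exp_add exp_diff exp_minus field_simps)
  have "(\<integral>\<^sup>+w. ennreal (exp (\<Sum>j\<in>{1..k}. if I j w then Y j w - v else 0)) \<partial>M)
      = (\<integral>\<^sup>+w. ennreal (f1 w) \<partial>M) + (\<integral>\<^sup>+w. ennreal (f2 w * exp (Y k w)) \<partial>M)"
    unfolding split using f_nonneg by (simp add: ennreal_plus nn_integral_add)
  also have "\<dots> \<le> (\<integral>\<^sup>+w. ennreal (f1 w) \<partial>M) + (\<integral>\<^sup>+w. ennreal (f2 w * exp v) \<partial>M)"
    using cond_exp_leD[OF Y_mgf[OF k] f2G] f_nonneg by (simp add: add_left_mono)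
  also have "\<dots> = (\<integral>\<^sup>+w. ennreal (f1 w) + ennreal (f2 w * exp v) \<partial>M)"
    by (rule nn_integral_add[symmetric]) measurable
  also have "\<dots> = (\<integral>\<^sup>+w. ennreal (exp (T w)) \<partial>M)"
    using f_nonneg by (intro nn_integral_cong) (simp add: f1_def f2_def flip: ennreal_plus exp_add)
  also have "\<dots> \<le> 1" using Suc by (simp add: T_def)
  finally show ?case unfolding k_def .
qed

lemma prob_exp_ge_le:
  assumes [measurable]: "T \<in> borel_measurable M" and T_le: "(\<integral>\<^sup>+w. ennreal (exp (T w)) \<partial>M) \<le> 1"
  shows "prob {w\<in>space M. a \<le> T w} \<le> exp (- a)"
proof -
  have "{w\<in>space M. a \<le> T w} = {w\<in>space M. 1 \<le> ennreal (exp (- a)) * ennreal (exp (T w))}"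
    by (auto simp flip: ennreal_mult ennreal_1 exp_add simp del: ennreal_1)
  then have "emeasure M {w\<in>space M. a \<le> T w}
      = emeasure M {w\<in>space M. 1 \<le> ennreal (exp (- a)) * ennreal (exp (T w))}" by simp
  also have "\<dots> \<le> ennreal (exp (- a)) * (\<integral>\<^sup>+w. ennreal (exp (T w)) * indicator (space M) w \<partial>M)"
    by (rule nn_integral_Markov_inequality) measurable
  also have "(\<integral>\<^sup>+w. ennreal (exp (T w)) * indicator (space M) w \<partial>M) = (\<integral>\<^sup>+w. ennreal (exp (T w)) \<partial>M)"
    by (rule nn_integral_cong) simp
  also have "ennreal (exp (- a)) * \<dots> \<le> ennreal (exp (- a))"
    using mult_left_mono[OF T_le, of "ennreal (exp (- a))"] by simp
  finally show ?thesis by (simp add: emeasure_eq_measure)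
qed

lemma prob_selected_sum_ge_le:
  fixes X :: "nat \<Rightarrow> 'a \<Rightarrow> real" and t l v :: real and n :: nat
  assumes subalg: "\<And>k. k \<in> {1..K} \<Longrightarrow> subalgebra M (G k)"
    and I_pred: "\<And>k j. k \<in> {1..K} \<Longrightarrow> j \<in> {1..k} \<Longrightarrow> Measurable.pred (G k) (I j)"
    and X_past: "\<And>k j. k \<in> {1..K} \<Longrightarrow> j \<in> {1..<k} \<Longrightarrow> X j \<in> borel_measurable (G k)"
    and X_meas: "\<And>k. k \<in> {1..K} \<Longrightarrow> X k \<in> borel_measurable M"
    and X_mgf: "\<And>k. k \<in> {1..K} \<Longrightarrow> cond_exp_le M (G k) (\<lambda>w. exp (l * X k w)) (exp v)"
    and l: "0 < l" and v: "0 \<le> v"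
  defines "B \<equiv> {w\<in>space M. t \<le> (\<Sum>j\<in>{1..K}. if I j w then X j w else 0)
                             \<and> (\<Sum>j\<in>{1..K}. if I j w then 1 else 0) \<le> real n}"
  shows "B \<in> events" "prob B \<le> exp (- (l * t - real n * v))"
proof -
  have [measurable]: "Measurable.pred M (I j)" "X j \<in> borel_measurable M" if "j \<in> {1..K}" for j
    using measurable_from_subalg[OF subalg[OF that] I_pred[OF that]] X_meas that by auto
  define T where "T w = (\<Sum>j\<in>{1..K}. if I j w then l * X j w - v else 0)" for w
  have [measurable]: "T \<in> borel_measurable M"
    unfolding T_def by (intro borel_measurable_sum) auto
  have [measurable]:
    "(\<lambda>w. \<Sum>j\<in>{1..K}. if I j w then X j w else 0) \<in> borel_measurable M"
    "(\<lambda>w. \<Sum>j\<in>{1..K}. if I j w then 1 else 0::real) \<in> borel_measurable M"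
    by (intro borel_measurable_sum; simp)+
  show "B \<in> events" unfolding B_def by measurable
  have T_eq: "T w = l * (\<Sum>j\<in>{1..K}. if I j w then X j w else 0) - v * (\<Sum>j\<in>{1..K}. if I j w then 1 else 0)"
    for w unfolding T_def by (simp add: sum_distrib_left sum_subtractf[symmetric] if_distrib cong: if_cong)
  have "B \<subseteq> {w\<in>space M. l * t - real n * v \<le> T w}"
  proof safe
    fix w assume "w \<in> B"
    then have "l * t \<le> l * (\<Sum>j\<in>{1..K}. if I j w then X j w else 0)"
      and "v * (\<Sum>j\<in>{1..K}. if I j w then 1 else 0) \<le> real n * v"
      using l v unfolding B_def by (auto simp: mult.commute[of v] intro: mult_right_mono)
    then show "l * t - real n * v \<le> T w" unfolding T_eq by linarith
  qed (simp add: B_def)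
  then have "prob B \<le> prob {w\<in>space M. l * t - real n * v \<le> T w}"
    by (intro finite_measure_mono) measurable
  also have "\<dots> \<le> exp (- (l * t - real n * v))"
    using subalg I_pred X_past X_meas X_mgf unfolding T_def
    by (intro prob_exp_ge_le nn_integral_exp_selected_sum_le_1[where Y = "\<lambda>j w. l * X j w" and K = K])
      auto
  finally show "prob B \<le> exp (- (l * t - real n * v))" .
qed

end

section \<open>Visit counts and empirical means\<close>

lemma Ncnt_eq_sum:
  "real (Ncnt S A k h s a w) = (\<Sum>j\<in>{1..<k}. if S j h w = s \<and> A j h w = a then 1 else 0)"
  unfolding Ncnt_def by (simp add: sum.inter_filter[symmetric])

lemma Ncnt_mono: "k \<le> k' \<Longrightarrow> Ncnt S A k h s a w \<le> Ncnt S A k' h s a w"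
  unfolding Ncnt_def by (rule card_mono) auto

lemma Ncnt_strict_mono_at_visit:
  assumes "1 \<le> j" "j < k" "S j h w = s" "A j h w = a"
  shows "Ncnt S A j h s a w < Ncnt S A k h s a w"
  unfolding Ncnt_def using assms by (intro psubset_card_mono) auto

lemma Ncnt_le: "Ncnt S A k h s a w \<le> k - 1"
proof -
  have "Ncnt S A k h s a w \<le> card {1..<k}" unfolding Ncnt_def by (rule card_mono) auto
  then show ?thesis by simp
qed

definition among_first_visits ::
    "(nat \<Rightarrow> nat \<Rightarrow> 'w \<Rightarrow> 's) \<Rightarrow> (nat \<Rightarrow> nat \<Rightarrow> 'w \<Rightarrow> 'a) \<Rightarrow> nat \<Rightarrow> nat \<Rightarrow> 's \<Rightarrow> 'a \<Rightarrow> nat \<Rightarrow> 'w \<Rightarrow> bool" where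
  "among_first_visits S A n h s a j w \<longleftrightarrow> S j h w = s \<and> A j h w = a \<and> Ncnt S A j h s a w < n"

lemma among_first_visits_eq:
  assumes "k \<le> K" "Ncnt S A k h s a w = n"
  shows "{j\<in>{1..K}. among_first_visits S A n h s a j w} = {j\<in>{1..<k}. S j h w = s \<and> A j h w = a}"
proof (intro set_eqI iffI)
  fix j assume "j \<in> {j\<in>{1..K}. among_first_visits S A n h s a j w}"
  moreover have "j < k" if "Ncnt S A j h s a w < n"
    using that Ncnt_mono[of k j S A h s a w] assms(2) by (cases "j < k") auto
  ultimately show "j \<in> {j\<in>{1..<k}. S j h w = s \<and> A j h w = a}"
    unfolding among_first_visits_def by auto
next
  fix j assume "j \<in> {j\<in>{1..<k}. S j h w = s \<and> A j h w = a}"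
  then show "j \<in> {j\<in>{1..K}. among_first_visits S A n h s a j w}"
    using Ncnt_strict_mono_at_visit[of j k S h w s A a] assms
    unfolding among_first_visits_def by auto
qed

text \<open>The count condition holds for every \<open>w\<close> (distinct visits have distinct counts); it is
  part of the event only so that the Chernoff bound need not prove it.\<close>
definition large_deviation ::
    "(nat \<Rightarrow> nat \<Rightarrow> 'w \<Rightarrow> 's) \<Rightarrow> (nat \<Rightarrow> nat \<Rightarrow> 'w \<Rightarrow> 'a) \<Rightarrow> nat \<Rightarrow> real \<Rightarrow> (nat \<Rightarrow> 'w \<Rightarrow> real)
      \<Rightarrow> nat \<Rightarrow> nat \<Rightarrow> 's \<Rightarrow> 'a \<Rightarrow> 'w \<Rightarrow> bool" where
  "large_deviation S A K Z X n h s a w \<longleftrightarrow>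
     sqrt (Z * real n) \<le> (\<Sum>j\<in>{1..K}. if among_first_visits S A n h s a j w then X j w else 0)
   \<and> (\<Sum>j\<in>{1..K}. if among_first_visits S A n h s a j w then 1 else 0) \<le> real n"

lemma sqrt_mult_div_self:
  fixes Z n :: real assumes "0 < n"
  shows "sqrt (Z * n) / n = sqrt (Z / n)"
proof -
  have "sqrt (Z * n) / n = sqrt (Z * n) / sqrt (n^2)" using assms by simp
  also have "\<dots> = sqrt (Z * n / n^2)" by (simp add: real_sqrt_divide)
  also have "Z * n / n^2 = Z / n" using assms by (simp add: power2_eq_square)
  finally show ?thesis .
qed

text \<open>At episode \<open>k\<close>, with \<open>N = Ncnt k\<close> visits, the first \<open>N\<close> visits are exactly the
  visits before \<open>k\<close>; so ruling out a large deviation after \<open>N\<close> visits bounds the error of the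
  empirical mean.  Without visits the estimate is \<open>0\<close> and the bonus \<open>sqrt Z\<close> exceeds \<open>1\<close>.\<close>
lemma emp_mean_error_le:
  fixes f :: "'s \<Rightarrow> 'a \<Rightarrow> real" and Y :: "nat \<Rightarrow> nat \<Rightarrow> 'w \<Rightarrow> real"
  assumes n_def: "Ncnt S A k h s a w = n" and k: "k \<le> K" and Z: "1 \<le> Z" and f: "f s a \<le> 1"
    and small: "1 \<le> n \<Longrightarrow>
      \<not> large_deviation S A K Z (\<lambda>j w. f (S j h w) (A j h w) - Y j h w) n h s a w"
  shows "f s a - emp_mean S A Y k w h s a \<le> sqrt (Z / real (max n 1))"
proof -
  define V where "V = {j\<in>{1..<k}. S j h w = s \<and> A j h w = a}"
  have card_V: "card V = n" using n_def unfolding V_def Ncnt_def .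
  have emp: "emp_mean S A Y k w h s a = (\<Sum>j\<in>V. Y j h w) / real (max n 1)"
    unfolding emp_mean_def V_def n_def[symmetric] ..
  show ?thesis
  proof (cases "n = 0")
    case True
    then have "V = {}" using card_V by (simp add: V_def)
    moreover have "1 \<le> sqrt Z" using Z by simp
    then have "f s a \<le> sqrt Z" using f by linarith
    ultimately show ?thesis using True emp by simp
  next
    case False
    then have n: "0 < real n" "max n 1 = n" by simp_all
    have visits: "{j\<in>{1..K}. among_first_visits S A n h s a j w} = V"
      unfolding V_def by (rule among_first_visits_eq[OF k n_def])
    have sum_visits: "(\<Sum>j\<in>{1..K}. if among_first_visits S A n h s a j w then X j else 0) = (\<Sum>j\<in>V. X j)"
      for X :: "nat \<Rightarrow> real"
      by (simp only: sum.inter_filter[OF finite_atLeastAtMost, symmetric] visits)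
    have "\<not> large_deviation S A K Z (\<lambda>j w. f (S j h w) (A j h w) - Y j h w) n h s a w"
      using small False by simp
    then have "\<not> sqrt (Z * real n) \<le> (\<Sum>j\<in>V. f (S j h w) (A j h w) - Y j h w)"
      using card_V unfolding large_deviation_def sum_visits by simp
    moreover have "(\<Sum>j\<in>V. f (S j h w) (A j h w) - Y j h w) = (\<Sum>j\<in>V. f s a - Y j h w)"
      by (rule sum.cong) (auto simp: V_def)
    moreover have "\<dots> = real n * f s a - (\<Sum>j\<in>V. Y j h w)"
      by (simp add: sum_subtractf card_V)
    ultimately have "real n * f s a - (\<Sum>j\<in>V. Y j h w) < sqrt (Z * real n)"
      by simp
    then have "(real n * f s a - (\<Sum>j\<in>V. Y j h w)) / real n < sqrt (Z * real n) / real n"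
      using n by (simp add: divide_strict_right_mono)
    then show ?thesis
      using n unfolding emp sqrt_mult_div_self[OF n(1)] by (simp add: field_simps)
  qed
qed

lemma Phat_eq_emp_mean:
  "Phat S A k w h s a s' = emp_mean S A (\<lambda>j i w. of_bool (S j (Suc i) w = s')) k w h s a"
  unfolding Phat_def emp_mean_def by (simp add: sum.inter_filter[symmetric] Int_def conj_assoc)

section \<open>History sigma-algebras\<close>

lemma measurable_sigma_gen_ev:
  assumes "Gen \<subseteq> Pow (space M)" "gen_ev M N X \<subseteq> Gen" "X \<in> space M \<rightarrow> space N"
  shows "X \<in> measurable (sigma (space M) Gen) N"
proof (rule measurableI)
  fix w assume "w \<in> space (sigma (space M) Gen)"
  then show "X w \<in> space N" using assms(1,3) by (auto simp: space_measure_of_conv)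
next
  fix B assume "B \<in> sets N"
  then have "X -` B \<inter> space M \<in> Gen" using assms(2) unfolding gen_ev_def by blast
  then show "X -` B \<inter> space (sigma (space M) Gen) \<in> sets (sigma (space M) Gen)"
    using assms(1) by (simp add: space_measure_of_conv)
qed

lemma gen_ev_subset_sets: "X \<in> measurable M N \<Longrightarrow> gen_ev M N X \<subseteq> sets M"
  unfolding gen_ev_def by (auto intro: measurable_sets)

lemma subalgebra_sigma:
  assumes "Gen \<subseteq> sets M"
  shows "subalgebra M (sigma (space M) Gen)"
  using assms sets.sets_into_space sets.sigma_sets_subset[OF assms]
  unfolding subalgebra_def by (auto simp: sets_measure_of_conv space_measure_of_conv)

lemma subalgebra_Galg:
  assumes S: "\<And>j i. j \<in> {1..k} \<Longrightarrow> i \<in> {1..H+1} \<Longrightarrow> S j i \<in> measurable M (count_space UNIV)"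
    and A: "\<And>j i. j \<in> {1..k} \<Longrightarrow> i \<in> {1..H} \<Longrightarrow> A j i \<in> measurable M (count_space UNIV)"
    and R: "\<And>j i. j \<in> {1..k} \<Longrightarrow> i \<in> {1..H} \<Longrightarrow> R j i \<in> borel_measurable M"
    and C: "\<And>j i. j \<in> {1..k} \<Longrightarrow> i \<in> {1..H} \<Longrightarrow> C j i \<in> borel_measurable M"
    and k: "1 \<le> k" and h: "h \<in> {1..H}"
  shows "subalgebra M (Galg M H S A R C k h st)"
  unfolding Galg_def ep_events_def using k h
  by (intro subalgebra_sigma Un_least UN_least; auto intro!: gen_ev_subset_sets S A R C)

lemma Galg_generators_Pow:
  "(\<Union>j\<in>{1..<k}. ep_events M H S A R C j)
    \<union> (\<Union>i\<in>{1..h}. gen_ev M (count_space UNIV) (S k i))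
    \<union> (\<Union>i\<in>{1..<h}. gen_ev M (count_space UNIV) (A k i) \<union> gen_ev M borel (R k i) \<union> gen_ev M borel (C k i))
    \<union> (if 1 \<le> st then gen_ev M (count_space UNIV) (A k h) else {})
    \<union> (if 2 \<le> st then gen_ev M borel (R k h) else {})
    \<union> (if 3 \<le> st then gen_ev M borel (C k h) else {}) \<subseteq> Pow (space M)"
  unfolding ep_events_def gen_ev_def by auto

lemma
  assumes "j \<in> {1..<k}"
  shows S_measurable_Galg_past: "i \<in> {1..H+1} \<Longrightarrow> S j i \<in> measurable (Galg M H S A R C k h st) (count_space UNIV)"
    and A_measurable_Galg_past: "i \<in> {1..H} \<Longrightarrow> A j i \<in> measurable (Galg M H S A R C k h st) (count_space UNIV)"
    and C_measurable_Galg_past: "i \<in> {1..H} \<Longrightarrow> C j i \<in> borel_measurable (Galg M H S A R C k h st)"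
  using assms unfolding Galg_def
  by (intro measurable_sigma_gen_ev[OF Galg_generators_Pow]; force simp: ep_events_def)+

lemma S_measurable_Galg_current:
  "i \<in> {1..h} \<Longrightarrow> S k i \<in> measurable (Galg M H S A R C k h st) (count_space UNIV)"
  unfolding Galg_def by (intro measurable_sigma_gen_ev[OF Galg_generators_Pow]) auto

lemma A_measurable_Galg_current:
  "1 \<le> st \<Longrightarrow> A k h \<in> measurable (Galg M H S A R C k h st) (count_space UNIV)"
  unfolding Galg_def by (intro measurable_sigma_gen_ev[OF Galg_generators_Pow]) auto

lemma S_measurable_Galg:
  assumes "j \<in> {1..k}" "h \<in> {1..H}"
  shows "S j h \<in> measurable (Galg M H S A R C k h st) (count_space UNIV)"
proof (cases "j < k")
  case True
  with assms show ?thesis by (intro S_measurable_Galg_past) auto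
next
  case False
  with assms show ?thesis using S_measurable_Galg_current[of h h] by simp
qed

lemma A_measurable_Galg:
  assumes "j \<in> {1..k}" "h \<in> {1..H}" "1 \<le> st"
  shows "A j h \<in> measurable (Galg M H S A R C k h st) (count_space UNIV)"
proof (cases "j < k")
  case True
  with assms show ?thesis by (intro A_measurable_Galg_past) auto
next
  case False
  with assms show ?thesis using A_measurable_Galg_current[of st] by simp
qed

lemma borel_measurable_state_action:
  fixes f :: "'s::countable \<Rightarrow> 'a::countable \<Rightarrow> real"
  assumes "X \<in> measurable G (count_space UNIV)" "Y \<in> measurable G (count_space UNIV)"
  shows "(\<lambda>w. f (X w) (Y w)) \<in> borel_measurable G"
  using assms by measurable

lemma pred_among_first_visits_Galg:
  fixes S :: "nat \<Rightarrow> nat \<Rightarrow> 'w \<Rightarrow> 's::countable" and A :: "nat \<Rightarrow> nat \<Rightarrow> 'w \<Rightarrow> 'a::countable"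
  assumes "j \<in> {1..k}" "h \<in> {1..H}" "1 \<le> st"
  shows "Measurable.pred (Galg M H S A R C k h st) (among_first_visits S A n h s a j)"
proof -
  have SA: "S i h \<in> measurable (Galg M H S A R C k h st) (count_space UNIV)"
    "A i h \<in> measurable (Galg M H S A R C k h st) (count_space UNIV)" if "i \<in> {1..j}" for i
    using S_measurable_Galg[of i k h H] A_measurable_Galg[of i k h H st] that assms by auto
  have "j \<in> {1..j}" using assms(1) by simp
  note SA_j = SA[OF this]
  have Ncnt_meas: "(\<lambda>w. real (Ncnt S A j h s a w)) \<in> borel_measurable (Galg M H S A R C k h st)"
    unfolding Ncnt_eq_sum using SA by (intro borel_measurable_sum) auto
  have visits_eq: "among_first_visits S A n h s a j
      = (\<lambda>w. S j h w = s \<and> A j h w = a \<and> real (Ncnt S A j h s a w) < real n)"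
    unfolding among_first_visits_def by simp
  show ?thesis unfolding visits_eq
    by (intro pred_intros_logic(3) pred_count_space_const1 borel_measurable_pred_less SA_j Ncnt_meas
        borel_measurable_const)
qed

section \<open>Concentration of the empirical costs and transitions\<close>

lemma Zconf_ge_1:
  assumes "1 \<le> H" "1 \<le> K" "0 < \<delta>" "\<delta> < 1"
  shows "1 \<le> Zconf TYPE('s::finite) TYPE('a::finite) H K \<delta>"
proof -
  define N where "N = real CARD('s)^2 * real CARD('a) * real H * real K"
  have "1 * 1 * 1 * 1 \<le> N"
    unfolding N_def using assms by (intro mult_mono) (simp_all add: one_le_power)
  then have "16 \<le> 16 * N / \<delta>"
    using assms by (simp add: le_divide_eq)
  then have "exp 1 \<le> 16 * N / \<delta>"
    using e_less_272 by linarith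
  then show ?thesis
    using assms unfolding Zconf_def N_def by (simp add: ln_ge_iff mult.assoc)
qed

lemma card_mult_exp_neg_Zconf_le:
  assumes "1 \<le> H" "1 \<le> K" "0 < \<delta>"
  shows "real H * real CARD('s) * real CARD('a) * (1 + real CARD('s)) * real K
           * exp (- Zconf TYPE('s::finite) TYPE('a::finite) H K \<delta>) \<le> \<delta>"
proof -
  have "exp (- Zconf TYPE('s) TYPE('a) H K \<delta>)
      = \<delta> / (16 * real CARD('s)^2 * real CARD('a) * real H * real K)"
    using assms unfolding Zconf_def by (simp add: exp_minus)
  then have "real H * real CARD('s) * real CARD('a) * (1 + real CARD('s)) * real K
        * exp (- Zconf TYPE('s) TYPE('a) H K \<delta>) = \<delta> * (1 + real CARD('s)) / (16 * real CARD('s))"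
    using assms by (simp add: field_simps power2_eq_square)
  also have "\<dots> \<le> \<delta> * (16 * real CARD('s)) / (16 * real CARD('s))"
  proof (intro divide_right_mono mult_left_mono)
    have "1 \<le> real CARD('s)" by simp
    then show "1 + real CARD('s) \<le> 16 * real CARD('s)" by linarith
  qed (use assms in auto)
  also have "\<dots> = \<delta>" by simp
  finally show ?thesis .
qed

locale episodic_cmdp = prob_space M
  for M :: "'w measure" and H K :: nat
    and S :: "nat \<Rightarrow> nat \<Rightarrow> 'w \<Rightarrow> 's::finite" and A :: "nat \<Rightarrow> nat \<Rightarrow> 'w \<Rightarrow> 'a::finite"
    and R C :: "nat \<Rightarrow> nat \<Rightarrow> 'w \<Rightarrow> real"
    and P :: "nat \<Rightarrow> 's \<Rightarrow> 'a \<Rightarrow> 's \<Rightarrow> real" and c :: "nat \<Rightarrow> 's \<Rightarrow> 'a \<Rightarrow> real" +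
  assumes H_pos: "1 \<le> H"
    and P_dist: "\<And>h s a. h \<in> {1..H} \<Longrightarrow> is_dist (P h s a)"
    and c_le_1: "\<And>h s a. h \<in> {1..H} \<Longrightarrow> c h s a \<le> 1"
    and S_measurable: "\<And>k h. k \<in> {1..K} \<Longrightarrow> h \<in> {1..H+1} \<Longrightarrow> S k h \<in> measurable M (count_space UNIV)"
    and A_measurable: "\<And>k h. k \<in> {1..K} \<Longrightarrow> h \<in> {1..H} \<Longrightarrow> A k h \<in> measurable M (count_space UNIV)"
    and R_measurable: "\<And>k h. k \<in> {1..K} \<Longrightarrow> h \<in> {1..H} \<Longrightarrow> R k h \<in> borel_measurable M"
    and C_measurable: "\<And>k h. k \<in> {1..K} \<Longrightarrow> h \<in> {1..H} \<Longrightarrow> C k h \<in> borel_measurable M"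
    and cost_mgf_integrable: "\<And>k h l. k \<in> {1..K} \<Longrightarrow> h \<in> {1..H} \<Longrightarrow>
      integrable M (\<lambda>w. exp (l * (C k h w - c h (S k h w) (A k h w))))"
    and cost_mgf_le: "\<And>k h l. k \<in> {1..K} \<Longrightarrow> h \<in> {1..H} \<Longrightarrow>
      AE w in M. real_cond_exp M (Galg M H S A R C k h 2)
        (\<lambda>w. exp (l * (C k h w - c h (S k h w) (A k h w)))) w \<le> exp (l^2 / 4)"
    and transition: "\<And>k h s'. k \<in> {1..K} \<Longrightarrow> h \<in> {1..H} \<Longrightarrow>
      AE w in M. real_cond_exp M (Galg M H S A R C k h 3) (indicator {w\<in>space M. S k (Suc h) w = s'}) w
        = P h (S k h w) (A k h w) s'"
begin

abbreviation history :: "nat \<Rightarrow> nat \<Rightarrow> nat \<Rightarrow> 'w measure" where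
  "history k h st \<equiv> Galg M H S A R C k h st"

lemma subalgebra_history: "k \<in> {1..K} \<Longrightarrow> h \<in> {1..H} \<Longrightarrow> subalgebra M (history k h st)"
  by (rule subalgebra_Galg) (use S_measurable A_measurable R_measurable C_measurable in auto)

text \<open>The parameter \<open>l = 2 sqrt (Z / n)\<close> makes the Chernoff exponent exactly \<open>Z\<close>.\<close>
lemma prob_large_deviation_le:
  fixes X :: "nat \<Rightarrow> 'w \<Rightarrow> real"
  assumes h: "h \<in> {1..H}" and st: "1 \<le> st" and n: "1 \<le> n" and Z: "0 < Z"
    and X_past: "\<And>k j. k \<in> {1..K} \<Longrightarrow> j \<in> {1..<k} \<Longrightarrow> X j \<in> borel_measurable (history k h st)"
    and X_meas: "\<And>k. k \<in> {1..K} \<Longrightarrow> X k \<in> borel_measurable M"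
    and X_mgf: "\<And>k l. k \<in> {1..K} \<Longrightarrow> 0 < l \<Longrightarrow>
      cond_exp_le M (history k h st) (\<lambda>w. exp (l * X k w)) (exp (l^2 / 4))"
  shows "{w\<in>space M. large_deviation S A K Z X n h s a w} \<in> events"
    "prob {w\<in>space M. large_deviation S A K Z X n h s a w} \<le> exp (- Z)"
proof -
  define l where "l = 2 * sqrt (Z / real n)"
  have l: "0 < l" using Z n by (simp add: l_def)
  have "sqrt (Z / real n) * sqrt (Z * real n) = Z"
    using Z n by (simp add: power2_eq_square flip: real_sqrt_mult)
  moreover have "real n * (sqrt (Z / real n))^2 = Z"
    using Z n by simp
  ultimately have exponent: "l * sqrt (Z * real n) - real n * (l^2 / 4) = Z"
    unfolding l_def by (simp add: power_mult_distrib)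
  have pred: "\<And>k j. k \<in> {1..K} \<Longrightarrow> j \<in> {1..k} \<Longrightarrow>
      Measurable.pred (history k h st) (among_first_visits S A n h s a j)"
    using h st by (intro pred_among_first_visits_Galg) auto
  note chernoff = prob_selected_sum_ge_le[where G = "\<lambda>k. history k h st" and K = K and X = X
      and I = "among_first_visits S A n h s a" and l = l and v = "l^2 / 4" and t = "sqrt (Z * real n)"
      and n = n, OF subalgebra_history[OF _ h] pred X_past X_meas X_mgf[OF _ l] l]
  show "{w\<in>space M. large_deviation S A K Z X n h s a w} \<in> events"
    using chernoff(1) unfolding large_deviation_def by simp
  show "prob {w\<in>space M. large_deviation S A K Z X n h s a w} \<le> exp (- Z)"
    using chernoff(2) unfolding large_deviation_def exponent by simp
qed

definition cost_dev :: "nat \<Rightarrow> nat \<Rightarrow> 'w \<Rightarrow> real" where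
  "cost_dev h j w = c h (S j h w) (A j h w) - C j h w"

definition trans_dev :: "nat \<Rightarrow> 's \<Rightarrow> nat \<Rightarrow> 'w \<Rightarrow> real" where
  "trans_dev h s' j w = P h (S j h w) (A j h w) s' - of_bool (S j (Suc h) w = s')"

lemma cost_dev_mgf:
  assumes k: "k \<in> {1..K}" and h: "h \<in> {1..H}"
  shows "cond_exp_le M (history k h 2) (\<lambda>w. exp (l * cost_dev h k w)) (exp (l^2 / 4))"
proof -
  have "(\<lambda>w. exp (l * cost_dev h k w)) = (\<lambda>w. exp ((- l) * (C k h w - c h (S k h w) (A k h w))))"
    unfolding cost_dev_def by (simp add: algebra_simps)
  then show ?thesis
    using cost_mgf_integrable[OF k h, of "- l"] cost_mgf_le[OF k h, of "- l"]
    by (simp add: cond_exp_leI[OF subalgebra_history[OF k h]])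
qed

lemma trans_dev_mgf:
  assumes k: "k \<in> {1..K}" and h: "h \<in> {1..H}" and l: "0 \<le> l"
  shows "cond_exp_le M (history k h 3) (\<lambda>w. exp (l * trans_dev h s' k w)) (exp (l^2 / 4))"
proof -
  have [measurable]: "S k (Suc h) \<in> measurable M (count_space UNIV)"
    using S_measurable k h by simp
  have "S k h \<in> measurable (history k h 3) (count_space UNIV)"
    "A k h \<in> measurable (history k h 3) (count_space UNIV)"
    using k h by (intro S_measurable_Galg A_measurable_Galg; simp)+
  then have "(\<lambda>w. P h (S k h w) (A k h w) s') \<in> borel_measurable (history k h 3)"
    by (rule borel_measurable_state_action)
  moreover have "0 \<le> P h s a s' \<and> P h s a s' \<le> 1" for s a
    using P_dist[OF h, of s a] member_le_sum[of s' UNIV "P h s a"] unfolding is_dist_def by auto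
  ultimately have "cond_exp_le M (history k h 3)
      (\<lambda>w. exp (l * (P h (S k h w) (A k h w) s' - indicator {w\<in>space M. S k (Suc h) w = s'} w)))
      (exp (l^2 / 8))"
    using transition[OF k h] l
    by (intro cond_exp_le_exp_centered_indicator subalgebra_history k h) auto
  then have "cond_exp_le M (history k h 3) (\<lambda>w. exp (l * trans_dev h s' k w)) (exp (l^2 / 8))"
    by (subst cond_exp_le_cong[where g' = "\<lambda>w. exp (l * trans_dev h s' k w)", symmetric])
      (auto simp: trans_dev_def)
  then show ?thesis by (rule cond_exp_le_mono) simp
qed

lemma prob_cost_deviation_le:
  assumes h: "h \<in> {1..H}" and n: "1 \<le> n" and Z: "0 < Z"
  shows "{w\<in>space M. large_deviation S A K Z (cost_dev h) n h s a w} \<in> events"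
    "prob {w\<in>space M. large_deviation S A K Z (cost_dev h) n h s a w} \<le> exp (- Z)"
proof -
  have past: "cost_dev h j \<in> borel_measurable (history k h 2)" if "k \<in> {1..K}" "j \<in> {1..<k}" for k j
    unfolding cost_dev_def using h that
    by (intro borel_measurable_diff borel_measurable_state_action
        S_measurable_Galg_past A_measurable_Galg_past C_measurable_Galg_past) auto
  have meas: "cost_dev h k \<in> borel_measurable M" if "k \<in> {1..K}" for k
    unfolding cost_dev_def using h that
    by (intro borel_measurable_diff borel_measurable_state_action
        S_measurable A_measurable C_measurable) auto
  note bound = prob_large_deviation_le[where st = 2, OF h _ n Z past meas cost_dev_mgf[OF _ h]]
  show "{w\<in>space M. large_deviation S A K Z (cost_dev h) n h s a w} \<in> events"
    by (rule bound(1)) simp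
  show "prob {w\<in>space M. large_deviation S A K Z (cost_dev h) n h s a w} \<le> exp (- Z)"
    by (rule bound(2)) simp
qed

lemma prob_trans_deviation_le:
  assumes h: "h \<in> {1..H}" and n: "1 \<le> n" and Z: "0 < Z"
  shows "{w\<in>space M. large_deviation S A K Z (trans_dev h s') n h s a w} \<in> events"
    "prob {w\<in>space M. large_deviation S A K Z (trans_dev h s') n h s a w} \<le> exp (- Z)"
proof -
  have past: "trans_dev h s' j \<in> borel_measurable (history k h 3)" if "k \<in> {1..K}" "j \<in> {1..<k}" for k j
  proof -
    have [measurable]: "S j h \<in> measurable (history k h 3) (count_space UNIV)"
      "S j (Suc h) \<in> measurable (history k h 3) (count_space UNIV)"
      "A j h \<in> measurable (history k h 3) (count_space UNIV)"
      using h that by (intro S_measurable_Galg_past A_measurable_Galg_past; simp)+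
    show ?thesis unfolding trans_dev_def by measurable
  qed
  have meas: "trans_dev h s' k \<in> borel_measurable M" if "k \<in> {1..K}" for k
  proof -
    have [measurable]: "S k h \<in> measurable M (count_space UNIV)"
      "S k (Suc h) \<in> measurable M (count_space UNIV)" "A k h \<in> measurable M (count_space UNIV)"
      using h that by (intro S_measurable A_measurable; simp)+
    show ?thesis unfolding trans_dev_def by measurable
  qed
  note bound = prob_large_deviation_le[where st = 3, OF h _ n Z past meas trans_dev_mgf[OF _ h]]
  show "{w\<in>space M. large_deviation S A K Z (trans_dev h s') n h s a w} \<in> events"
    by (rule bound(1)) simp_all
  show "prob {w\<in>space M. large_deviation S A K Z (trans_dev h s') n h s a w} \<le> exp (- Z)"
    by (rule bound(2)) simp_all
qed

definition deviation_events :: "real \<Rightarrow> 'w set" where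
  "deviation_events Z =
     (\<Union>(h, s, a, n)\<in>{1..H} \<times> UNIV \<times> UNIV \<times> {1..K}.
        {w\<in>space M. large_deviation S A K Z (cost_dev h) n h s a w})
   \<union> (\<Union>(h, s, a, s', n)\<in>{1..H} \<times> UNIV \<times> UNIV \<times> UNIV \<times> {1..K}.
        {w\<in>space M. large_deviation S A K Z (trans_dev h s') n h s a w})"

lemma prob_deviation_events_le:
  assumes "0 < Z"
  shows "deviation_events Z \<in> events"
    "prob (deviation_events Z)
       \<le> real H * real CARD('s) * real CARD('a) * (1 + real CARD('s)) * real K * exp (- Z)"
proof -
  let ?I = "{1..H} \<times> (UNIV :: 's set) \<times> (UNIV :: 'a set) \<times> {1..K}"
  let ?J = "{1..H} \<times> (UNIV :: 's set) \<times> (UNIV :: 'a set) \<times> (UNIV :: 's set) \<times> {1..K}"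
  let ?Bc = "\<lambda>(h, s, a, n). {w\<in>space M. large_deviation S A K Z (cost_dev h) n h s a w}"
  let ?Bt = "\<lambda>(h, s, a, s', n). {w\<in>space M. large_deviation S A K Z (trans_dev h s') n h s a w}"
  have Bc: "?Bc i \<in> events" "prob (?Bc i) \<le> exp (- Z)" if "i \<in> ?I" for i
    using that prob_cost_deviation_le[OF _ _ assms] by auto
  have Bt: "?Bt i \<in> events" "prob (?Bt i) \<le> exp (- Z)" if "i \<in> ?J" for i
    using that prob_trans_deviation_le[OF _ _ assms] by auto
  have "deviation_events Z = (\<Union>i\<in>?I. ?Bc i) \<union> (\<Union>i\<in>?J. ?Bt i)"
    unfolding deviation_events_def by simp
  moreover have "(\<Union>i\<in>?I. ?Bc i) \<in> events" "(\<Union>i\<in>?J. ?Bt i) \<in> events"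
    using Bc Bt by (auto intro!: sets.finite_UN)
  ultimately show "deviation_events Z \<in> events" by simp
  have "prob (deviation_events Z) \<le> prob (\<Union>i\<in>?I. ?Bc i) + prob (\<Union>i\<in>?J. ?Bt i)"
    using \<open>deviation_events Z = _\<close> \<open>(\<Union>i\<in>?I. ?Bc i) \<in> events\<close> \<open>(\<Union>i\<in>?J. ?Bt i) \<in> events\<close>
    by (simp add: measure_subadditive emeasure_eq_measure)
  also have "\<dots> \<le> real (card ?I) * exp (- Z) + real (card ?J) * exp (- Z)"
    using Bc Bt by (intro add_mono prob_UN_le_card_mult) auto
  also have "\<dots> = real H * real CARD('s) * real CARD('a) * (1 + real CARD('s)) * real K * exp (- Z)"
    by (simp add: card_cartesian_product algebra_simps)
  finally show "prob (deviation_events Z)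
       \<le> real H * real CARD('s) * real CARD('a) * (1 + real CARD('s)) * real K * exp (- Z)" .
qed

lemma estimation_errors_le:
  fixes s s' :: 's and a :: 'a
  assumes w: "w \<in> space M - deviation_events Z" and Z: "1 \<le> Z"
    and k: "k \<in> {1..K}" and h: "h \<in> {1..H}"
  defines "bonus \<equiv> sqrt (Z / real (max (Ncnt S A k h s a w) 1))"
  shows "c h s a - emp_mean S A C k w h s a \<le> bonus"
    "P h s a s' - Phat S A k w h s a s' \<le> bonus"
proof -
  define n where "n = Ncnt S A k h s a w"
  have n_le: "n \<le> K" using Ncnt_le[of S A k h s a w] k unfolding n_def by auto
  have no_dev: "\<not> large_deviation S A K Z (cost_dev h) n h s a w"
    "\<not> large_deviation S A K Z (trans_dev h s') n h s a w" if "1 \<le> n"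
    using w h n_le that unfolding deviation_events_def by auto
  show "c h s a - emp_mean S A C k w h s a \<le> bonus"
    unfolding bonus_def
    by (rule emp_mean_error_le[OF refl _ Z]) (use k h c_le_1 no_dev(1) in \<open>auto simp: cost_dev_def[abs_def] n_def\<close>)
  have "P h s a s' \<le> 1"
    using P_dist[OF h, of s a] member_le_sum[of s' UNIV "P h s a"] unfolding is_dist_def by auto
  show "P h s a s' - Phat S A k w h s a s' \<le> bonus"
    unfolding bonus_def Phat_eq_emp_mean
    by (rule emp_mean_error_le[OF refl _ Z, where f = "\<lambda>s a. P h s a s'"])
      (use k no_dev(2) \<open>P h s a s' \<le> 1\<close> in \<open>auto simp: trans_dev_def[abs_def] n_def\<close>)
qed

lemma exists_confidence_event:
  assumes \<delta>: "0 < \<delta>" "\<delta> < 1"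
  shows "\<exists>E\<in>events. 1 - \<delta> \<le> prob E \<and> (\<forall>w\<in>E. \<forall>k\<in>{1..K}. \<forall>h\<in>{1..H}. \<forall>s a.
     c h s a - emp_mean S A C k w h s a \<le> beta H K \<delta> S A k w h s a \<and>
     (\<forall>s'. P h s a s' - Phat S A k w h s a s' \<le> beta H K \<delta> S A k w h s a))"
proof (cases "K = 0")
  case True
  then show ?thesis using \<delta> prob_space by (intro bexI[of _ "space M"]) auto
next
  case False
  then have K: "1 \<le> K" by simp
  define Z where "Z = Zconf TYPE('s) TYPE('a) H K \<delta>"
  have Z: "1 \<le> Z" unfolding Z_def by (rule Zconf_ge_1[OF H_pos K \<delta>])
  then have dev: "deviation_events Z \<in> events"
    "prob (deviation_events Z)
       \<le> real H * real CARD('s) * real CARD('a) * (1 + real CARD('s)) * real K * exp (- Z)"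
    by (intro prob_deviation_events_le; simp)+
  have "prob (deviation_events Z) \<le> \<delta>"
    using dev(2) card_mult_exp_neg_Zconf_le[where 's = 's and 'a = 'a, OF H_pos K \<delta>(1)]
    unfolding Z_def by linarith
  then have "1 - \<delta> \<le> prob (space M - deviation_events Z)"
    using dev(1) by (simp add: prob_compl)
  moreover have "beta H K \<delta> S A k w h s a = sqrt (Z / real (max (Ncnt S A k h s a w) 1))" for k w h s a
    unfolding beta_def Z_def ..
  ultimately show ?thesis
    using dev(1) Z estimation_errors_le by (intro bexI[of _ "space M - deviation_events Z"]) auto
qed

end

section \<open>Pessimistic cost estimates\<close>

lemma is_dist_weighted_sum_bounds:
  fixes p f :: "'x::finite \<Rightarrow> real"
  assumes p: "is_dist p" and "\<And>x. lo \<le> f x" "\<And>x. f x \<le> hi"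
  shows "lo \<le> (\<Sum>x\<in>UNIV. p x * f x)" "(\<Sum>x\<in>UNIV. p x * f x) \<le> hi"
proof -
  have p_nonneg: "\<And>x. 0 \<le> p x" and p_sum: "(\<Sum>x\<in>UNIV. p x) = 1"
    using p unfolding is_dist_def by auto
  have "lo = (\<Sum>x\<in>UNIV. p x * lo)" using p_sum by (simp flip: sum_distrib_right)
  also have "\<dots> \<le> (\<Sum>x\<in>UNIV. p x * f x)"
    using p_nonneg assms(2) by (intro sum_mono mult_left_mono)
  finally show "lo \<le> (\<Sum>x\<in>UNIV. p x * f x)" .
  have "(\<Sum>x\<in>UNIV. p x * f x) \<le> (\<Sum>x\<in>UNIV. p x * hi)"
    using p_nonneg assms(3) by (intro sum_mono mult_left_mono)
  also have "\<dots> = hi" using p_sum by (simp flip: sum_distrib_right)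
  finally show "(\<Sum>x\<in>UNIV. p x * f x) \<le> hi" .
qed

lemma Vr_bounds:
  assumes q: "is_policy H q" and P: "\<forall>h\<in>{1..H}. \<forall>s a. is_dist (P h s a)"
    and g: "\<forall>h\<in>{1..H}. \<forall>s a. 0 \<le> g h s a \<and> g h s a \<le> 1"
    and h: "1 \<le> h" "h + n \<le> H + 1"
  shows "0 \<le> Vr n h q g P s \<and> Vr n h q g P s \<le> real n"
  using h
proof (induction n arbitrary: h s)
  case 0
  then show ?case by simp
next
  case (Suc n)
  then have h: "h \<in> {1..H}" by auto
  have IH: "0 \<le> Vr n (Suc h) q g P s' \<and> Vr n (Suc h) q g P s' \<le> real n" for s'
    using Suc by auto
  have step: "0 \<le> g h s a + (\<Sum>s'\<in>UNIV. P h s a s' * Vr n (Suc h) q g P s')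
     \<and> g h s a + (\<Sum>s'\<in>UNIV. P h s a s' * Vr n (Suc h) q g P s') \<le> real (Suc n)" for a
  proof -
    have "is_dist (P h s a)" "0 \<le> g h s a" "g h s a \<le> 1" using P g h by auto
    with is_dist_weighted_sum_bounds[of "P h s a" 0 "Vr n (Suc h) q g P" "real n"] IH
    show ?thesis by auto
  qed
  have "is_dist (q h s)" using q h unfolding is_policy_def by auto
  then show ?case
    using is_dist_weighted_sum_bounds[of "q h s" 0 _ "real (Suc n)"] step by simp
qed

lemma weighted_sum_le_perturbed:
  fixes p p' v v' :: "'x::finite \<Rightarrow> real"
  assumes p'_nonneg: "\<And>x. 0 \<le> p' x" and err: "\<And>x. p x - p' x \<le> e" and "0 \<le> e"
    and v: "\<And>x. 0 \<le> v x" "\<And>x. v x \<le> B" and v_le: "\<And>x. v x \<le> v' x"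
  shows "(\<Sum>x\<in>UNIV. p x * v x) \<le> (\<Sum>x\<in>UNIV. p' x * v' x) + real CARD('x) * B * e"
proof -
  have "(\<Sum>x\<in>UNIV. p x * v x) = (\<Sum>x\<in>UNIV. p' x * v x) + (\<Sum>x\<in>UNIV. (p x - p' x) * v x)"
    by (simp add: algebra_simps flip: sum.distrib)
  also have "(\<Sum>x\<in>UNIV. p' x * v x) \<le> (\<Sum>x\<in>UNIV. p' x * v' x)"
    using p'_nonneg v_le by (intro sum_mono mult_left_mono)
  also have "(\<Sum>x\<in>UNIV. (p x - p' x) * v x) \<le> (\<Sum>x\<in>(UNIV::'x set). e * B)"
  proof (rule sum_mono)
    fix x
    have "(p x - p' x) * v x \<le> e * v x" using err v by (intro mult_right_mono)
    also have "\<dots> \<le> e * B" using \<open>0 \<le> e\<close> v by (intro mult_left_mono)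
    finally show "(p x - p' x) * v x \<le> e * B" .
  qed
  finally show ?thesis by (simp add: ac_simps)
qed

text \<open>Simulation lemma: an error of at most \<open>b\<close> per transition probability is paid for by
  inflating the per-step signal by \<open>|S| H b\<close>, since every value-to-go lies in \<open>[0, H]\<close>.\<close>
lemma Vr_le_of_model_error:
  assumes q: "is_policy H q" and P: "\<forall>h\<in>{1..H}. \<forall>s a. is_dist (P h s a)"
    and g: "\<forall>h\<in>{1..H}. \<forall>s a. 0 \<le> g h s a \<and> g h s a \<le> 1"
    and P'_nonneg: "\<And>h s a s'. 0 \<le> P' h s a s'" and b_nonneg: "\<And>h s a. 0 \<le> b h s a"
    and P_err: "\<And>h s a s'. h \<in> {1..H} \<Longrightarrow> P h s a s' - P' h s a s' \<le> b h s a"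
    and g_err: "\<And>h s a. h \<in> {1..H} \<Longrightarrow> g h s a + real CARD('s) * real H * b h s a \<le> g' h s a"
    and h: "1 \<le> h" "h + n \<le> H + 1"
  shows "Vr n h q g P (s::'s::finite) \<le> Vr n h q g' P' s"
  using h
proof (induction n arbitrary: h s)
  case 0
  then show ?case by simp
next
  case (Suc n)
  then have h: "h \<in> {1..H}" by auto
  have step: "g h s a + (\<Sum>s'\<in>UNIV. P h s a s' * Vr n (Suc h) q g P s')
     \<le> g' h s a + (\<Sum>s'\<in>UNIV. P' h s a s' * Vr n (Suc h) q g' P' s')" for a
  proof -
    have "(\<Sum>s'\<in>UNIV. P h s a s' * Vr n (Suc h) q g P s')
        \<le> (\<Sum>s'\<in>UNIV. P' h s a s' * Vr n (Suc h) q g' P' s') + real CARD('s) * real H * b h s a"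
    proof (rule weighted_sum_le_perturbed)
      fix s'
      show "0 \<le> Vr n (Suc h) q g P s'" "Vr n (Suc h) q g P s' \<le> real H"
        using Vr_bounds[OF q P g, of "Suc h" n s'] Suc.prems by auto
      show "Vr n (Suc h) q g P s' \<le> Vr n (Suc h) q g' P' s'"
        using Suc.IH[of "Suc h" s'] Suc.prems by simp
    qed (fact P'_nonneg P_err[OF h] b_nonneg)+
    then show ?thesis using g_err[OF h, of s a] by linarith
  qed
  have "\<And>a. 0 \<le> q h s a" using q h unfolding is_policy_def is_dist_def by auto
  then show ?case unfolding Vr.simps by (intro sum_mono mult_left_mono step)
qed

lemma V1_le_of_model_error:
  assumes q: "is_policy H q" and P: "\<forall>h\<in>{1..H}. \<forall>s a. is_dist (P h s a)"
    and g: "\<forall>h\<in>{1..H}. \<forall>s a. 0 \<le> g h s a \<and> g h s a \<le> 1"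
    and P'_nonneg: "\<And>h s a s'. 0 \<le> P' h s a s'" and b_nonneg: "\<And>h s a. 0 \<le> b h s a"
    and P_err: "\<And>h s a s'. h \<in> {1..H} \<Longrightarrow> P h s a s' - P' h s a s' \<le> b h s a"
    and g_err: "\<And>h s a. h \<in> {1..H} \<Longrightarrow> g h s a + real CARD('s) * real H * b h s a \<le> g' h s a"
    and mu: "is_dist (\<mu> :: 's::finite \<Rightarrow> real)"
  shows "V1 H q \<mu> g P \<le> V1 H q \<mu> g' P'"
  unfolding V1_def Vh_def
proof (intro sum_mono mult_left_mono)
  fix s
  show "0 \<le> \<mu> s" using mu unfolding is_dist_def by blast
  show "Vr (H + 1 - 1) 1 q g P s \<le> Vr (H + 1 - 1) 1 q g' P' s"
    by (rule Vr_le_of_model_error[OF q P g P'_nonneg b_nonneg P_err g_err]) simp_all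
qed

lemma PiSet_cost_le_threshold:
  fixes S :: "nat \<Rightarrow> nat \<Rightarrow> 'w \<Rightarrow> 's::finite" and A :: "nat \<Rightarrow> nat \<Rightarrow> 'w \<Rightarrow> 'a::finite"
  assumes P: "\<forall>h\<in>{1..H}. \<forall>s a. is_dist (P h s a)"
    and c: "\<forall>h\<in>{1..H}. \<forall>s a. 0 \<le> c h s a \<and> c h s a \<le> 1"
    and mu: "is_dist \<mu>" and pi0: "V1 H pi0 \<mu> c P = c0" "c0 < \<tau>"
    and Z: "0 \<le> Zconf TYPE('s) TYPE('a) H K \<delta>"
    and conf: "\<And>h s a. h \<in> {1..H} \<Longrightarrow>
      c h s a - emp_mean S A C k w h s a \<le> beta H K \<delta> S A k w h s a \<and>
      (\<forall>s'. P h s a s' - Phat S A k w h s a s' \<le> beta H K \<delta> S A k w h s a)"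
    and q: "q \<in> PiSet H K \<delta> \<tau> c0 \<mu> pi0 S A C k w"
  shows "V1 H q \<mu> c P \<le> \<tau>"
proof (cases "(\<tau> + c0) / 2 \<le> V1 H pi0 \<mu> (cpess H K \<delta> S A C k w) (Phat S A k w)")
  case True
  then show ?thesis using q pi0 unfolding PiSet_def by simp
next
  case False
  then have q_policy: "is_policy H q"
    and q_safe: "V1 H q \<mu> (cpess H K \<delta> S A C k w) (Phat S A k w) \<le> \<tau>"
    using q unfolding PiSet_def by auto
  have "V1 H q \<mu> c P \<le> V1 H q \<mu> (cpess H K \<delta> S A C k w) (Phat S A k w)"
  proof (rule V1_le_of_model_error[OF q_policy P c _ _ _ _ mu])
    show "0 \<le> Phat S A k w h s a s'" for h s a s' unfolding Phat_def by simp
    show "0 \<le> beta H K \<delta> S A k w h s a" for h s a unfolding beta_def using Z by simp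
    show "P h s a s' - Phat S A k w h s a s' \<le> beta H K \<delta> S A k w h s a" if "h \<in> {1..H}" for h s a s'
      using conf[OF that] by blast
    show "c h s a + real CARD('s) * real H * beta H K \<delta> S A k w h s a \<le> cpess H K \<delta> S A C k w h s a"
      if "h \<in> {1..H}" for h s a
      using conf[OF that] unfolding cpess_def by (simp add: algebra_simps)
  qed
  then show ?thesis using q_safe by simp
qed

theorem lemma5p1:
  fixes M :: "'w measure"
    and S :: "nat \<Rightarrow> nat \<Rightarrow> 'w \<Rightarrow> 's::finite"
    and A :: "nat \<Rightarrow> nat \<Rightarrow> 'w \<Rightarrow> 'a::finite"
    and R C :: "nat \<Rightarrow> nat \<Rightarrow> 'w \<Rightarrow> real"
    and pol :: "nat \<Rightarrow> 'w \<Rightarrow> (nat \<Rightarrow> 's \<Rightarrow> 'a \<Rightarrow> real)"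
    and P :: "nat \<Rightarrow> 's \<Rightarrow> 'a \<Rightarrow> 's \<Rightarrow> real"
    and r c :: "nat \<Rightarrow> 's \<Rightarrow> 'a \<Rightarrow> real"
    and \<mu> :: "'s \<Rightarrow> real"
    and pi0 :: "nat \<Rightarrow> 's \<Rightarrow> 'a \<Rightarrow> real"
    and H K :: nat
    and \<tau> c0 \<delta> :: real
  assumes M: "prob_space M"
    and H: "1 \<le> H"
    and P_dist: "\<forall>h\<in>{1..H}. \<forall>s a. is_dist (P h s a)"
    and r_range: "\<forall>h\<in>{1..H}. \<forall>s a. 0 \<le> r h s a \<and> r h s a \<le> 1"
    and c_range: "\<forall>h\<in>{1..H}. \<forall>s a. 0 \<le> c h s a \<and> c h s a \<le> 1"
    and mu_dist: "is_dist \<mu>"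
    and tau: "0 < \<tau>" "\<tau> \<le> real H"
    and pi0: "is_policy H pi0" "V1 H pi0 \<mu> c P = c0" "c0 < \<tau>"
    and delta: "0 < \<delta>" "\<delta> < 1"
    and meas_S: "\<forall>k\<in>{1..K}. \<forall>h\<in>{1..H+1}. S k h \<in> measurable M (count_space UNIV)"
    and meas_A: "\<forall>k\<in>{1..K}. \<forall>h\<in>{1..H}. A k h \<in> measurable M (count_space UNIV)"
    and meas_R: "\<forall>k\<in>{1..K}. \<forall>h\<in>{1..H}. R k h \<in> borel_measurable M"
    and meas_C: "\<forall>k\<in>{1..K}. \<forall>h\<in>{1..H}. C k h \<in> borel_measurable M"
    and init: "\<forall>k\<in>{1..K}. \<forall>s. AE w in M.
        real_cond_exp M (Falg M H S A R C (k - 1)) (indicator {w\<in>space M. S k 1 w = s}) w = \<mu> s"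
    and pol_meas: "\<forall>k\<in>{1..K}. \<forall>h s a. (\<lambda>w. pol k w h s a) \<in> borel_measurable (Falg M H S A R C (k - 1))"
    and pol_alg: "\<forall>k\<in>{1..K}. \<forall>w\<in>space M.
        pol k w \<in> PiSet H K \<delta> \<tau> c0 \<mu> pi0 S A C k w \<and>
        (\<forall>q\<in>PiSet H K \<delta> \<tau> c0 \<mu> pi0 S A C k w.
            V1 H q \<mu> (rbar H K \<delta> \<tau> c0 S A R k w) (Phat S A k w)
              \<le> V1 H (pol k w) \<mu> (rbar H K \<delta> \<tau> c0 S A R k w) (Phat S A k w))"
    and action: "\<forall>k\<in>{1..K}. \<forall>h\<in>{1..H}. \<forall>a. AE w in M.
        real_cond_exp M (Galg M H S A R C k h 0) (indicator {w\<in>space M. A k h w = a}) w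
          = pol k w h (S k h w) a"
    and reward_noise: "\<forall>k\<in>{1..K}. \<forall>h\<in>{1..H}.
        integrable M (\<lambda>w. R k h w - r h (S k h w) (A k h w)) \<and>
        (AE w in M. real_cond_exp M (Galg M H S A R C k h 1) (\<lambda>w. R k h w - r h (S k h w) (A k h w)) w = 0) \<and>
        (\<forall>l::real. integrable M (\<lambda>w. exp (l * (R k h w - r h (S k h w) (A k h w)))) \<and>
           (AE w in M. real_cond_exp M (Galg M H S A R C k h 1)
               (\<lambda>w. exp (l * (R k h w - r h (S k h w) (A k h w)))) w \<le> exp (l^2 / 4)))"
    and cost_noise: "\<forall>k\<in>{1..K}. \<forall>h\<in>{1..H}.
        integrable M (\<lambda>w. C k h w - c h (S k h w) (A k h w)) \<and>
        (AE w in M. real_cond_exp M (Galg M H S A R C k h 2) (\<lambda>w. C k h w - c h (S k h w) (A k h w)) w = 0) \<and>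
        (\<forall>l::real. integrable M (\<lambda>w. exp (l * (C k h w - c h (S k h w) (A k h w)))) \<and>
           (AE w in M. real_cond_exp M (Galg M H S A R C k h 2)
               (\<lambda>w. exp (l * (C k h w - c h (S k h w) (A k h w)))) w \<le> exp (l^2 / 4)))"
    and transition: "\<forall>k\<in>{1..K}. \<forall>h\<in>{1..H}. \<forall>s'. AE w in M.
        real_cond_exp M (Galg M H S A R C k h 3) (indicator {w\<in>space M. S k (Suc h) w = s'}) w
          = P h (S k h w) (A k h w) s'"
  shows "\<exists>E\<in>sets M. measure M E \<ge> 1 - \<delta> \<and>
           (\<forall>w\<in>E. \<forall>k\<in>{1..K}. \<forall>q\<in>PiSet H K \<delta> \<tau> c0 \<mu> pi0 S A C k w. V1 H q \<mu> c P \<le> \<tau>)"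
proof -
  interpret cmdp: episodic_cmdp M H K S A R C P c
    using M H P_dist c_range meas_S meas_A meas_R meas_C cost_noise transition
    unfolding episodic_cmdp_def episodic_cmdp_axioms_def by blast
  obtain E where E: "E \<in> sets M" "1 - \<delta> \<le> measure M E"
    and conf: "\<forall>w\<in>E. \<forall>k\<in>{1..K}. \<forall>h\<in>{1..H}. \<forall>s a.
      c h s a - emp_mean S A C k w h s a \<le> beta H K \<delta> S A k w h s a \<and>
      (\<forall>s'. P h s a s' - Phat S A k w h s a s' \<le> beta H K \<delta> S A k w h s a)"
    using cmdp.exists_confidence_event[OF delta] by blast
  have "V1 H q \<mu> c P \<le> \<tau>" if "w \<in> E" "k \<in> {1..K}" "q \<in> PiSet H K \<delta> \<tau> c0 \<mu> pi0 S A C k w" for w k q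
  proof (rule PiSet_cost_le_threshold[OF P_dist c_range mu_dist pi0(2,3) _ _ that(3)])
    have "1 \<le> Zconf TYPE('s) TYPE('a) H K \<delta>"
      by (rule Zconf_ge_1[OF H _ delta]) (use that(2) in simp)
    then show "0 \<le> Zconf TYPE('s) TYPE('a) H K \<delta>" by simp
    show "\<And>h s a. h \<in> {1..H} \<Longrightarrow> c h s a - emp_mean S A C k w h s a \<le> beta H K \<delta> S A k w h s a \<and>
      (\<forall>s'. P h s a s' - Phat S A k w h s a s' \<le> beta H K \<delta> S A k w h s a)"
      using conf that(1,2) by blast
  qed
  then show ?thesis using E by blast
qed

end
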